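(* Let $n\ge 2$ and let $\mathcal{F}$ be an induced-$\mathcal{D}_2$-saturated family in $\mathcal{B}_n$. If $\emptyset\in\mathcal{F}$ or $[n]\in\mathcal{F}$, then $|\mathcal{F}|\ge n+1$.
   Context: $\mathcal{B}_n$ denotes the Boolean lattice $(2^{[n]},\subseteq)$. A family $\mathcal{F}\subseteq 2^{[n]}$ (ordered by inclusion) is induced-$\mathcal{P}$-saturated if it contains no induced copy of $\mathcal{P}$ (an injection $f$ with $u\le v\iff f(u)\subseteq f(v)$) but every family $\mathcal{F}'$ with $\mathcal{F}\subsetneq\mathcal{F}'\subseteq 2^{[n]}$ contains one. $\mathcal{D}_2$ (the diamond) is the four-element poset $\{A,B,C,D\}$ with $A<B<D$, $A<C<D$, and $B,C$ incomparable. *)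

theory Defs
  imports Main
begin

definition contains_induced ::
  "'p set \<Rightarrow> ('p \<Rightarrow> 'p \<Rightarrow> bool) \<Rightarrow> 'a set set \<Rightarrow> bool" where
  "contains_induced P le F \<longleftrightarrow>
     (\<exists>f. inj_on f P \<and> f ` P \<subseteq> F \<and>
          (\<forall>u\<in>P. \<forall>v\<in>P. le u v \<longleftrightarrow> f u \<subseteq> f v))"

definition induced_saturated ::
  "'p set \<Rightarrow> ('p \<Rightarrow> 'p \<Rightarrow> bool) \<Rightarrow> nat \<Rightarrow> nat set set \<Rightarrow> bool" where
  "induced_saturated P le n F \<longleftrightarrow>
     F \<subseteq> Pow {1..n} \<and> \<not> contains_induced P le F \<and>
     (\<forall>F'. F \<subset> F' \<and> F' \<subseteq> Pow {1..n} \<longrightarrow> contains_induced P le F')"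

text \<open>The diamond D_2 on {0,1,2,3}: A=0, B=1, C=2, D=3 with A<B<D, A<C<D.\<close>
definition diamond_carrier :: "nat set" where
  "diamond_carrier = {0, 1, 2, 3}"

definition diamond_le :: "nat \<Rightarrow> nat \<Rightarrow> bool" where
  "diamond_le u v \<longleftrightarrow> u = v \<or> u = 0 \<or> v = 3"

end

theory Submission
  imports Defs
begin

text \<open>Complementation in U maps diamonds to diamonds, so it suffices to treat the case
  \<open>{} \<in> F\<close>. Then every \<open>i \<in> U\<close> is the difference of a covering pair \<open>Y - {i} \<subset> Y\<close> in F:
  choose \<open>Z \<in> F\<close> maximal among the sets avoiding i that lie below a member containing i.
  If \<open>insert i Z \<notin> F\<close>, saturation yields a diamond through \<open>insert i Z\<close>; at the bottom or
  the top of it this diamond could be moved into F, and at a middle position the other middle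
  set would be a larger candidate than Z. Distinct i give distinct tops Y, since otherwise
  \<open>{}\<close>, \<open>Y - {i}\<close>, \<open>Y - {j}\<close>, Y would form a diamond; together with \<open>{}\<close> these are
  \<open>card U + 1\<close> members of F.\<close>

definition is_diamond :: "'a set \<Rightarrow> 'a set \<Rightarrow> 'a set \<Rightarrow> 'a set \<Rightarrow> bool" where
  "is_diamond A B C D \<longleftrightarrow> A \<subset> B \<and> A \<subset> C \<and> B \<subset> D \<and> C \<subset> D \<and> \<not> B \<subseteq> C \<and> \<not> C \<subseteq> B"

definition has_diamond :: "'a set set \<Rightarrow> bool" where
  "has_diamond G \<longleftrightarrow> (\<exists>A\<in>G. \<exists>B\<in>G. \<exists>C\<in>G. \<exists>D\<in>G. is_diamond A B C D)"

definition diamond_saturated :: "'a set \<Rightarrow> 'a set set \<Rightarrow> bool" where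
  "diamond_saturated U F \<longleftrightarrow> F \<subseteq> Pow U \<and> \<not> has_diamond F \<and>
     (\<forall>X. X \<subseteq> U \<longrightarrow> X \<notin> F \<longrightarrow> has_diamond (insert X F))"

lemma is_diamond_swap: "is_diamond A B C D \<longleftrightarrow> is_diamond A C B D"
  unfolding is_diamond_def by blast

lemma is_diamond_distinct:
  "is_diamond A B C D \<Longrightarrow> distinct [A, B, C, D]"
  unfolding is_diamond_def by auto

lemma is_diamond_shrink_bottom: "is_diamond A B C D \<Longrightarrow> A' \<subseteq> A \<Longrightarrow> is_diamond A' B C D"
  unfolding is_diamond_def by blast

lemma is_diamond_enlarge_top: "is_diamond A B C D \<Longrightarrow> D \<subseteq> D' \<Longrightarrow> is_diamond A B C D'"
  unfolding is_diamond_def by blast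

lemma has_diamondI:
  "is_diamond A B C D \<Longrightarrow> A \<in> G \<Longrightarrow> B \<in> G \<Longrightarrow> C \<in> G \<Longrightarrow> D \<in> G \<Longrightarrow> has_diamond G"
  unfolding has_diamond_def by blast

lemma contains_induced_diamond_iff:
  "contains_induced diamond_carrier diamond_le G \<longleftrightarrow> has_diamond G"
proof
  assume "contains_induced diamond_carrier diamond_le G"
  then obtain f where mem: "f ` {0, 1, 2, 3} \<subseteq> G"
    and le: "\<forall>u\<in>{0, 1, 2, 3}. \<forall>v\<in>{0, 1, 2, 3}. diamond_le u v \<longleftrightarrow> f u \<subseteq> f v"
    unfolding contains_induced_def diamond_carrier_def by (elim exE conjE)
  from mem have "f 0 \<in> G" "f 1 \<in> G" "f 2 \<in> G" "f 3 \<in> G"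
    by simp_all
  moreover have "is_diamond (f 0) (f 1) (f 2) (f 3)"
    using le unfolding is_diamond_def diamond_le_def by (auto simp: psubset_eq)
  ultimately show "has_diamond G"
    by (blast intro: has_diamondI)
next
  assume "has_diamond G"
  then obtain A B C D where "A \<in> G" "B \<in> G" "C \<in> G" "D \<in> G" and dia: "is_diamond A B C D"
    unfolding has_diamond_def by blast
  moreover have "\<forall>u\<in>{0, 1, 2, 3}. \<forall>v\<in>{0, 1, 2, 3}.
      diamond_le u v \<longleftrightarrow> [A, B, C, D] ! u \<subseteq> [A, B, C, D] ! v"
  proof (intro ballI)
    fix u v :: nat
    assume "u \<in> {0, 1, 2, 3}" "v \<in> {0, 1, 2, 3}"
    have "A \<subseteq> B" "A \<subseteq> C" "A \<subseteq> D" "B \<subseteq> D" "C \<subseteq> D" "\<not> B \<subseteq> A" "\<not> C \<subseteq> A"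
      "\<not> D \<subseteq> A" "\<not> D \<subseteq> B" "\<not> D \<subseteq> C" "\<not> B \<subseteq> C" "\<not> C \<subseteq> B"
      using dia unfolding is_diamond_def by blast+
    then show "diamond_le u v \<longleftrightarrow> [A, B, C, D] ! u \<subseteq> [A, B, C, D] ! v"
      using \<open>u \<in> {0, 1, 2, 3}\<close> \<open>v \<in> {0, 1, 2, 3}\<close> unfolding diamond_le_def by auto
  qed
  moreover have "inj_on (\<lambda>u. [A, B, C, D] ! u) {0, 1, 2, 3}"
    using is_diamond_distinct[OF dia] by (auto simp: inj_on_def)
  ultimately show "contains_induced diamond_carrier diamond_le G"
    unfolding contains_induced_def diamond_carrier_def
    by (intro exI[of _ "\<lambda>u. [A, B, C, D] ! u"] conjI) auto
qed

lemma induced_saturated_imp_diamond_saturated: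
  "induced_saturated diamond_carrier diamond_le n F \<Longrightarrow> diamond_saturated {1..n} F"
  unfolding induced_saturated_def diamond_saturated_def contains_induced_diamond_iff by blast

lemma has_diamond_insertE:
  assumes "has_diamond (insert X F)" and "\<not> has_diamond F"
  obtains (bottom) B C D where "is_diamond X B C D" "B \<in> F" "C \<in> F" "D \<in> F"
    | (middle) A C D where "is_diamond A X C D" "A \<in> F" "C \<in> F" "D \<in> F"
    | (top) A B C where "is_diamond A B C X" "A \<in> F" "B \<in> F" "C \<in> F"
proof -
  obtain A B C D where mem: "A \<in> insert X F" "B \<in> insert X F" "C \<in> insert X F" "D \<in> insert X F"
    and dia: "is_diamond A B C D"
    using assms(1) unfolding has_diamond_def by blast
  have distinct: "distinct [A, B, C, D]"
    using dia by (rule is_diamond_distinct)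
  have "X \<in> {A, B, C, D}"
    using mem dia assms(2) has_diamondI by blast
  then consider "X = A" | "X = B" | "X = C" | "X = D"
    by blast
  then show thesis
  proof cases
    case 1
    then show thesis
      using bottom[of B C D] dia mem distinct by auto
  next
    case 2
    then show thesis
      using middle[of A C D] dia mem distinct by auto
  next
    case 3
    then show thesis
      using middle[of A B D] dia mem distinct is_diamond_swap by auto
  next
    case 4
    then show thesis
      using top[of A B C] dia mem distinct by auto
  qed
qed

lemma has_diamond_image_compl:
  assumes "H \<subseteq> Pow U" and "has_diamond H"
  shows "has_diamond ((\<lambda>X. U - X) ` H)"
proof -
  obtain A B C D where mem: "A \<in> H" "B \<in> H" "C \<in> H" "D \<in> H" and dia: "is_diamond A B C D"
    using assms(2) unfolding has_diamond_def by blast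
  have "is_diamond (U - D) (U - B) (U - C) (U - A)"
    using dia mem assms(1) unfolding is_diamond_def by blast
  then show ?thesis
    using mem by (blast intro: has_diamondI)
qed

lemma image_compl_image_compl:
  "H \<subseteq> Pow U \<Longrightarrow> (\<lambda>X. U - X) ` (\<lambda>X. U - X) ` H = H"
  by (force simp: image_image Diff_Diff_Int Int_absorb1)

lemma inj_on_compl: "inj_on (\<lambda>X. U - X) (Pow U)"
  by (rule inj_onI) blast

lemma diamond_saturated_image_compl:
  assumes sat: "diamond_saturated U F"
  shows "diamond_saturated U ((\<lambda>X. U - X) ` F)"
proof -
  let ?c = "\<lambda>X. U - X"
  have F: "F \<subseteq> Pow U" and free: "\<not> has_diamond F"
    using sat unfolding diamond_saturated_def by blast+
  have "\<not> has_diamond (?c ` F)"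
    using has_diamond_image_compl[of "?c ` F" U] free image_compl_image_compl[OF F] by auto
  moreover have "has_diamond (insert X (?c ` F))" if "X \<subseteq> U" "X \<notin> ?c ` F" for X
  proof -
    have "U - X \<notin> F"
      using that by (metis Diff_Diff_Int Int_absorb1 image_eqI)
    then have "has_diamond (insert (U - X) F)"
      using sat unfolding diamond_saturated_def by blast
    then have "has_diamond (?c ` insert (U - X) F)"
      using F by (intro has_diamond_image_compl) auto
    then show ?thesis
      using that by (simp add: double_diff)
  qed
  ultimately show ?thesis
    unfolding diamond_saturated_def by blast
qed

lemma diamond_free_common_upper_comparable:
  assumes "\<not> has_diamond F" and "{} \<in> F" "Z \<in> F" "C \<in> F" "D \<in> F" and "Z \<subset> D" "C \<subset> D"
  shows "Z \<subseteq> C \<or> C \<subseteq> Z"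
proof (rule ccontr)
  assume "\<not> (Z \<subseteq> C \<or> C \<subseteq> Z)"
  then have "is_diamond {} Z C D"
    using assms unfolding is_diamond_def by blast
  then show False
    using assms by (blast intro: has_diamondI)
qed

lemma diamond_saturated_ex_member:
  assumes sat: "diamond_saturated U F" and "i \<in> U"
  shows "\<exists>Y\<in>F. i \<in> Y"
proof (rule ccontr)
  assume none: "\<not> (\<exists>Y\<in>F. i \<in> Y)"
  then have "has_diamond (insert {i} F)"
    using sat \<open>i \<in> U\<close> unfolding diamond_saturated_def by blast
  moreover have "\<not> has_diamond F"
    using sat unfolding diamond_saturated_def by blast
  ultimately show False
    by (cases rule: has_diamond_insertE) (use none in \<open>auto simp: is_diamond_def\<close>)
qed

lemma diamond_saturated_ex_cover:
  assumes sat: "diamond_saturated U F" and "{} \<in> F" "finite U" "i \<in> U"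
  shows "\<exists>Y\<in>F. i \<in> Y \<and> Y - {i} \<in> F"
proof -
  have F: "F \<subseteq> Pow U" and free: "\<not> has_diamond F"
    using sat unfolding diamond_saturated_def by blast+
  define S where "S = {Z \<in> F. i \<notin> Z \<and> (\<exists>Y\<in>F. i \<in> Y \<and> Z \<subseteq> Y)}"
  have "finite F"
    using F \<open>finite U\<close> by (simp add: finite_subset)
  then have "finite S"
    unfolding S_def by (rule rev_finite_subset) blast
  moreover have "{} \<in> S"
    using diamond_saturated_ex_member[OF sat \<open>i \<in> U\<close>] \<open>{} \<in> F\<close> unfolding S_def by blast
  ultimately obtain Z where "Z \<in> S" and Z_max: "\<And>W. W \<in> S \<Longrightarrow> Z \<subseteq> W \<Longrightarrow> Z = W"
    using finite_has_maximal[of S] by blast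
  then obtain Y where Z: "Z \<in> F" "i \<notin> Z" and Y: "Y \<in> F" "insert i Z \<subseteq> Y"
    unfolding S_def by blast
  show ?thesis
  proof (cases "insert i Z \<in> F")
    case True
    with Z show ?thesis
      by (intro bexI[of _ "insert i Z"]) auto
  next
    case False
    moreover have "insert i Z \<subseteq> U"
      using Y F by blast
    ultimately have "has_diamond (insert (insert i Z) F)"
      using sat unfolding diamond_saturated_def by blast
    then have False
      using free
    proof (cases rule: has_diamond_insertE)
      case (bottom B C D)
      then have "is_diamond {} B C D"
        by (blast intro: is_diamond_shrink_bottom)
      then show False
        using has_diamondI[of "{}" B C D F] bottom \<open>{} \<in> F\<close> free by blast
    next
      case (middle A C D)
      then have "Z \<subset> D" "C \<subset> D"
        unfolding is_diamond_def by auto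
      then have "Z \<subseteq> C \<or> C \<subseteq> Z"
        using diamond_free_common_upper_comparable[OF free \<open>{} \<in> F\<close> Z(1)] middle by blast
      then have "Z \<subseteq> C" "Z \<noteq> C" "i \<notin> C"
        using middle(1) Z(2) unfolding is_diamond_def by auto
      moreover have "i \<in> D"
        using middle(1) unfolding is_diamond_def by auto
      ultimately have "C \<in> S"
        using middle \<open>C \<subset> D\<close> unfolding S_def by blast
      then show False
        using Z_max \<open>Z \<subseteq> C\<close> \<open>Z \<noteq> C\<close> by blast
    next
      case (top A B C)
      then have "is_diamond A B C Y"
        using Y(2) by (blast intro: is_diamond_enlarge_top)
      then show False
        using has_diamondI[of A B C Y F] top Y(1) free by blast
    qed
    then show ?thesis ..
  qed
qed

lemma diamond_saturated_card_ge_if_empty: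
  assumes sat: "diamond_saturated U F" and "{} \<in> F" "finite U"
  shows "card U + 1 \<le> card F"
proof -
  have F: "F \<subseteq> Pow U" and free: "\<not> has_diamond F"
    using sat unfolding diamond_saturated_def by blast+
  obtain cover where cover: "\<And>i. i \<in> U \<Longrightarrow> cover i \<in> F \<and> i \<in> cover i \<and> cover i - {i} \<in> F"
    using diamond_saturated_ex_cover[OF assms] by metis
  have "inj_on cover U"
  proof (rule inj_onI, rule ccontr)
    fix i j
    assume "i \<in> U" "j \<in> U" "cover i = cover j" "i \<noteq> j"
    with cover[of i] cover[of j] show False
      using diamond_free_common_upper_comparable[OF free \<open>{} \<in> F\<close>,
          of "cover i - {i}" "cover i - {j}" "cover i"]
      by auto
  qed
  moreover have "{} \<notin> cover ` U"
    using cover by fastforce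
  ultimately have "card (insert {} (cover ` U)) = card U + 1"
    using \<open>finite U\<close> by (simp add: card_image)
  moreover have "insert {} (cover ` U) \<subseteq> F"
    using cover \<open>{} \<in> F\<close> by blast
  moreover have "finite F"
    using F \<open>finite U\<close> finite_subset by blast
  ultimately show ?thesis
    by (metis card_mono)
qed

lemma diamond_saturated_card_ge_if_full:
  assumes sat: "diamond_saturated U F" and "U \<in> F" "finite U"
  shows "card U + 1 \<le> card F"
proof -
  have F: "F \<subseteq> Pow U"
    using sat unfolding diamond_saturated_def by blast
  have "card U + 1 \<le> card ((\<lambda>X. U - X) ` F)"
    using diamond_saturated_card_ge_if_empty[OF diamond_saturated_image_compl[OF sat]] assms by blast
  also have "\<dots> = card F"
    using inj_on_compl F by (blast intro: card_image inj_on_subset)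
  finally show ?thesis .
qed

theorem lemma3p3:
  fixes n :: nat and F :: "nat set set"
  assumes "n \<ge> 2"
    and "induced_saturated diamond_carrier diamond_le n F"
    and "{} \<in> F \<or> {1..n} \<in> F"
  shows "card F \<ge> n + 1"
proof -
  \<comment> \<open>The bound holds for every n.\<close>
  have "diamond_saturated {1..n} F"
    using assms(2) by (rule induced_saturated_imp_diamond_saturated)
  then have "card {1..n} + 1 \<le> card F"
    using assms(3) diamond_saturated_card_ge_if_empty diamond_saturated_card_ge_if_full by blast
  then show ?thesis
    by simp
qed

end
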